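(* The set $V:=\{\alpha\in\ell^\infty_w:\ G_{\tilde\psi,\psi}\alpha=\alpha\}$ is a closed subspace of $\ell^\infty_w$. Consequently, $(\mathcal H^\infty_w,\|\cdot\|_{\mathcal H^\infty_w})$ is a Banach space.
   Context: Standing setting. $\mathcal H$ is a separable complex Hilbert space with inner product $\langle\cdot,\cdot\rangle$, linear in the first and conjugate-linear in the second argument. $X$ is a countable index set. A weight is a map $w:X\to(0,\infty)$; $\ell^\infty_w$ is the Banach space of sequences $\alpha=(\alpha_k)_{k\in X}$ with $\|\alpha\|_{\ell^\infty_w}:=\sup_{k\in X}|\alpha_k|w(k)<\infty$. $\psi=(\psi_k)_{k\in X}$ is a frame for $\mathcal H$ and $\tilde\psi=(\tilde\psi_k)_{k\in X}$ is a dual frame, i.e. $f=\sum_{k}\langle f,\tilde\psi_k\rangle\psi_k=\sum_k\langle f,\psi_k\rangle\tilde\psi_k$ for all $f\in\mathcal H$ (unconditional convergence in $\mathcal H$). The cross Gram matrix $G_{\tilde\psi,\psi}$ has entries $(G_{\tilde\psi,\psi})_{k,l}=\langle\psi_l,\tilde\psi_k\rangle$ and acts by $(G_{\tilde\psi,\psi}\alpha)_k=\sum_{l\in X}\langle\psi_l,\tilde\psi_k\rangle\alpha_l$; it is assumed to define a bounded operator on $\ell^\infty_w$, meaning these series converge absolutely for every $\alpha\in\ell^\infty_w$ and $G_{\tilde\psi,\psi}:\ell^\infty_w\to\ell^\infty_w$ is bounded (equivalently $\|G_{\tilde\psi,\psi}\|_{\mathcal B(\ell^\infty_w)}=\sup_{k}\sum_{l}|\langle\psi_l,\tilde\psi_k\rangle|\,w(k)/w(l)<\infty$).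 Let $\mathcal H^{00}:=\operatorname{span}\{\tilde\psi_k:k\in X\}$ (finite linear combinations), a dense subspace of $\mathcal H$. Equip $\mathcal H$ with the locally convex topology $\sigma(\mathcal H,\mathcal H^{00})$ generated by the seminorms $f\mapsto|\langle f,v\rangle|$, $v\in\mathcal H^{00}$ (Hausdorff and metrizable). Let $\overline{\mathcal H}$ be the completion of $\mathcal H$ in this topology, with $\mathcal H\subseteq\overline{\mathcal H}$, and for each $v\in\mathcal H^{00}$ let $f\mapsto\langle f,v\rangle_{\overline{\mathcal H},\mathcal H^{00}}$ be the unique continuous linear extension of $f\mapsto\langle f,v\rangle$ to $\overline{\mathcal H}$. Define $\mathcal H^\infty_w$ as the set of all $f\in\overline{\mathcal H}$ for which there is a sequence $(f_n)_{n\ge1}\subseteq\mathcal H$ converging to $f$ in $\sigma(\overline{\mathcal H},\mathcal H^{00})$ (i.e. $\langle f_n,v\rangle\to\langle f,v\rangle_{\overline{\mathcal H},\mathcal H^{00}}$ for all $v\in\mathcal H^{00}$) with $\sup_{n\in\mathbb N,k\in X}|\langle f_n,\tilde\psi_k\rangle|w(k)<\infty$. The coefficient operator is $C_{\tilde\psi}:\mathcal H^\infty_w\to\ell^\infty_w$, $C_{\tilde\psi}f=(\langle f,\tilde\psi_k\rangle_{\overline{\mathcal H},\mathcal H^{00}})_{k\in X}$, and the norm on $\mathcal H^\infty_w$ is $\|f\|_{\mathcal H^\infty_w}:=\|C_{\tilde\psi}f\|_{\ell^\infty_w}$. *)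

theory Defs
  imports "HOL-Analysis.Analysis"
begin

text \<open>HOL-Analysis only provides real inner product spaces, so we introduce complex
  Hilbert spaces as a type class: a complete real normed vector space with a complex
  scalar multiplication extending the real one and a complex inner product, linear in
  the first and conjugate-linear in the second argument, inducing the norm.\<close>

class complex_hilbert = real_normed_vector + complete_space +
  fixes cinner :: "'a \<Rightarrow> 'a \<Rightarrow> complex"
    and scaleC :: "complex \<Rightarrow> 'a \<Rightarrow> 'a"
  assumes scaleC_add_right: "scaleC a (x + y) = scaleC a x + scaleC a y"
    and scaleC_add_left: "scaleC (a + b) x = scaleC a x + scaleC b x"
    and scaleC_scaleC: "scaleC a (scaleC b x) = scaleC (a * b) x"
    and scaleC_one: "scaleC 1 x = x"
    and scaleR_scaleC: "scaleR r x = scaleC (complex_of_real r) x"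
    and cinner_add_left: "cinner (x + y) z = cinner x z + cinner y z"
    and cinner_scaleC_left: "cinner (scaleC a x) y = a * cinner x y"
    and cinner_commute: "cinner x y = cnj (cinner y x)"
    and cinner_nonneg: "0 \<le> Re (cinner x x)"
    and cinner_eq_zero_iff: "cinner x x = 0 \<longleftrightarrow> x = 0"
    and norm_cinner: "norm x = sqrt (Re (cinner x x))"

definition is_frame :: "('i \<Rightarrow> 'a::complex_hilbert) \<Rightarrow> bool" where
  "is_frame \<psi> \<longleftrightarrow> (\<exists>A B. 0 < A \<and> 0 < B \<and> (\<forall>f.
      (\<lambda>k. (cmod (cinner f (\<psi> k)))\<^sup>2) summable_on UNIV \<and>
      A * (norm f)\<^sup>2 \<le> (\<Sum>\<^sub>\<infinity>k. (cmod (cinner f (\<psi> k)))\<^sup>2) \<and>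
      (\<Sum>\<^sub>\<infinity>k. (cmod (cinner f (\<psi> k)))\<^sup>2) \<le> B * (norm f)\<^sup>2))"

definition is_dual_frame :: "('i \<Rightarrow> 'a::complex_hilbert) \<Rightarrow> ('i \<Rightarrow> 'a) \<Rightarrow> bool" where
  "is_dual_frame \<psi> \<psi>t \<longleftrightarrow> is_frame \<psi> \<and> is_frame \<psi>t \<and>
     (\<forall>f. ((\<lambda>k. scaleC (cinner f (\<psi>t k)) (\<psi> k)) has_sum f) UNIV \<and>
          ((\<lambda>k. scaleC (cinner f (\<psi> k)) (\<psi>t k)) has_sum f) UNIV)"

definition linf_w :: "('i \<Rightarrow> real) \<Rightarrow> ('i \<Rightarrow> complex) set" where
  "linf_w w = {\<alpha>. \<exists>M. \<forall>k. cmod (\<alpha> k) * w k \<le> M}"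

definition linf_w_norm :: "('i \<Rightarrow> real) \<Rightarrow> ('i \<Rightarrow> complex) \<Rightarrow> real" where
  "linf_w_norm w \<alpha> = (SUP k. cmod (\<alpha> k) * w k)"

definition gram :: "('i \<Rightarrow> 'a::complex_hilbert) \<Rightarrow> ('i \<Rightarrow> 'a) \<Rightarrow> ('i \<Rightarrow> complex) \<Rightarrow> ('i \<Rightarrow> complex)" where
  "gram \<psi>t \<psi> \<alpha> = (\<lambda>k. \<Sum>\<^sub>\<infinity>l. cinner (\<psi> l) (\<psi>t k) * \<alpha> l)"

text \<open>Boundedness of the Gram matrix on the weighted space (Schur-type condition).\<close>
definition gram_bounded_w :: "('i \<Rightarrow> real) \<Rightarrow> ('i \<Rightarrow> 'a::complex_hilbert) \<Rightarrow> ('i \<Rightarrow> 'a) \<Rightarrow> bool" where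
  "gram_bounded_w w \<psi>t \<psi> \<longleftrightarrow> (\<exists>M. \<forall>k.
      (\<lambda>l. cmod (cinner (\<psi> l) (\<psi>t k)) * w k / w l) summable_on UNIV \<and>
      (\<Sum>\<^sub>\<infinity>l. cmod (cinner (\<psi> l) (\<psi>t k)) * w k / w l) \<le> M)"

definition closed_subspace_linf_w :: "('i \<Rightarrow> real) \<Rightarrow> ('i \<Rightarrow> complex) set \<Rightarrow> bool" where
  "closed_subspace_linf_w w V \<longleftrightarrow> V \<subseteq> linf_w w \<and> (\<lambda>k. 0) \<in> V \<and>
     (\<forall>\<alpha>\<in>V. \<forall>\<beta>\<in>V. (\<lambda>k. \<alpha> k + \<beta> k) \<in> V) \<and>
     (\<forall>c. \<forall>\<alpha>\<in>V. (\<lambda>k. c * \<alpha> k) \<in> V) \<and>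
     (\<forall>\<alpha>s \<alpha>. (\<forall>n. \<alpha>s n \<in> V) \<and> \<alpha> \<in> linf_w w \<and>
        (\<lambda>n. linf_w_norm w (\<lambda>k. \<alpha>s n k - \<alpha> k)) \<longlonglongrightarrow> 0 \<longrightarrow> \<alpha> \<in> V)"

definition H00 :: "('i \<Rightarrow> 'a::complex_hilbert) \<Rightarrow> 'a set" where
  "H00 \<psi>t = {v. \<exists>F c. finite F \<and> v = (\<Sum>k\<in>F. scaleC (c k) (\<psi>t k))}"

text \<open>Model of the completion of \<open>H\<close> w.r.t. \<open>\<sigma>(H,H00)\<close>: the conjugate-linear functionals
  on \<open>H00\<close> (normalised to be 0 off \<open>H00\<close>), with the topology of pointwise convergence on
  \<open>H00\<close>; the value \<open>\<phi> v\<close> is the extended pairing of \<open>\<phi>\<close> with \<open>v\<close>.\<close>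
definition Hbar :: "('i \<Rightarrow> 'a::complex_hilbert) \<Rightarrow> ('a \<Rightarrow> complex) set" where
  "Hbar \<psi>t = {\<phi>. (\<forall>u\<in>H00 \<psi>t. \<forall>v\<in>H00 \<psi>t. \<forall>a b.
        \<phi> (scaleC a u + scaleC b v) = cnj a * \<phi> u + cnj b * \<phi> v) \<and>
      (\<forall>v. v \<notin> H00 \<psi>t \<longrightarrow> \<phi> v = 0)}"

definition embed_H :: "('i \<Rightarrow> 'a::complex_hilbert) \<Rightarrow> 'a \<Rightarrow> ('a \<Rightarrow> complex)" where
  "embed_H \<psi>t f = (\<lambda>v. if v \<in> H00 \<psi>t then cinner f v else 0)"

definition Hinf_w :: "('i \<Rightarrow> real) \<Rightarrow> ('i \<Rightarrow> 'a::complex_hilbert) \<Rightarrow> ('a \<Rightarrow> complex) set" where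
  "Hinf_w w \<psi>t = {\<phi> \<in> Hbar \<psi>t. \<exists>fs :: nat \<Rightarrow> 'a.
      (\<forall>v\<in>H00 \<psi>t. (\<lambda>n. embed_H \<psi>t (fs n) v) \<longlonglongrightarrow> \<phi> v) \<and>
      (\<exists>M. \<forall>n k. cmod (cinner (fs n) (\<psi>t k)) * w k \<le> M)}"

definition coeff_op :: "('i \<Rightarrow> 'a::complex_hilbert) \<Rightarrow> ('a \<Rightarrow> complex) \<Rightarrow> ('i \<Rightarrow> complex)" where
  "coeff_op \<psi>t \<phi> = (\<lambda>k. \<phi> (\<psi>t k))"

definition Hinf_w_norm :: "('i \<Rightarrow> real) \<Rightarrow> ('i \<Rightarrow> 'a::complex_hilbert) \<Rightarrow> ('a \<Rightarrow> complex) \<Rightarrow> real" where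
  "Hinf_w_norm w \<psi>t \<phi> = linf_w_norm w (coeff_op \<psi>t \<phi>)"

definition banach_fun_space :: "('b \<Rightarrow> complex) set \<Rightarrow> (('b \<Rightarrow> complex) \<Rightarrow> real) \<Rightarrow> bool" where
  "banach_fun_space S N \<longleftrightarrow>
     (\<lambda>x. 0) \<in> S \<and>
     (\<forall>f\<in>S. \<forall>g\<in>S. (\<lambda>x. f x + g x) \<in> S) \<and>
     (\<forall>c. \<forall>f\<in>S. (\<lambda>x. c * f x) \<in> S) \<and>
     (\<forall>f\<in>S. 0 \<le> N f \<and> (N f = 0 \<longleftrightarrow> f = (\<lambda>x. 0))) \<and>
     (\<forall>c. \<forall>f\<in>S. N (\<lambda>x. c * f x) = cmod c * N f) \<and>
     (\<forall>f\<in>S. \<forall>g\<in>S. N (\<lambda>x. f x + g x) \<le> N f + N g) \<and>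
     (\<forall>u. (\<forall>n. u n \<in> S) \<and> (\<forall>e>0. \<exists>M. \<forall>m\<ge>M. \<forall>n\<ge>M. N (\<lambda>x. u m x - u n x) < e) \<longrightarrow>
        (\<exists>f\<in>S. (\<lambda>n. N (\<lambda>x. u n x - f x)) \<longlonglongrightarrow> 0))"

end

theory Submission
  imports Defs
begin

text \<open>The coefficient operator identifies \<open>H\<^sup>\<infinity>_w\<close> isometrically with the space \<open>V\<close> of
  \<open>\<ell>\<^sup>\<infinity>_w\<close>-sequences fixed by the cross Gram matrix: coefficients of elements of \<open>H\<^sup>\<infinity>_w\<close> are
  reproduced by the Gram matrix (reconstruction formula plus dominated convergence), and
  conversely every \<open>\<alpha> \<in> V\<close> is the coefficient sequence of the weak limit of the partial
  sums of \<open>\<Sum> \<alpha>\<^sub>l \<psi>\<^sub>l\<close>, whose coefficients are the partial Gram sums and hence stay bounded.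
  Since the Gram matrix is bounded on \<open>\<ell>\<^sup>\<infinity>_w\<close>, \<open>V\<close> is closed in the Banach space
  \<open>\<ell>\<^sup>\<infinity>_w\<close>, and completeness transfers to \<open>H\<^sup>\<infinity>_w\<close>.\<close>

section \<open>Complex inner products\<close>

lemma scaleC_zero_left [simp]: "scaleC 0 (x::'a::complex_hilbert) = 0"
  using scaleR_scaleC[of 0 x] by simp

lemma scaleC_zero_right [simp]: "scaleC a (0::'a::complex_hilbert) = 0"
  using scaleC_add_right[of a "0::'a" 0] by simp

lemma cinner_zero_left [simp]: "cinner (0::'a::complex_hilbert) y = 0"
  using cinner_add_left[of "0::'a" 0 y] by simp

lemma cinner_minus_left: "cinner (- (x::'a::complex_hilbert)) y = - cinner x y"
  using cinner_scaleC_left[of "-1" x y] scaleR_scaleC[of "-1" x] by simp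

lemma cinner_diff_left: "cinner ((x::'a::complex_hilbert) - z) y = cinner x y - cinner z y"
  using cinner_add_left[of x "-z" y] by (simp add: cinner_minus_left)

lemma cinner_add_right: "cinner (x::'a::complex_hilbert) (y + z) = cinner x y + cinner x z"
  by (metis cinner_add_left cinner_commute complex_cnj_add)

lemma cinner_scaleC_right: "cinner (x::'a::complex_hilbert) (scaleC a y) = cnj a * cinner x y"
  by (metis cinner_commute cinner_scaleC_left complex_cnj_mult)

lemma cinner_diff_right: "cinner (x::'a::complex_hilbert) (y - z) = cinner x y - cinner x z"
  by (metis cinner_commute cinner_diff_left complex_cnj_diff)

lemma cinner_sum_left: "cinner (\<Sum>k\<in>F. f k) (y::'a::complex_hilbert) = (\<Sum>k\<in>F. cinner (f k) y)"
  by (induction F rule: infinite_finite_induct) (auto simp: cinner_add_left)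

lemma cinner_sum_right: "cinner (y::'a::complex_hilbert) (\<Sum>k\<in>F. f k) = (\<Sum>k\<in>F. cinner y (f k))"
  by (induction F rule: infinite_finite_induct) (auto simp: cinner_add_right cinner_commute[of y 0])

lemma scaleC_sum_right: "scaleC a (\<Sum>k\<in>F. f k) = (\<Sum>k\<in>F. scaleC a (f k::'a::complex_hilbert))"
  by (induction F rule: infinite_finite_induct) (auto simp: scaleC_add_right)

lemma Re_cinner_polarization:
  "Re (cinner (x::'a::complex_hilbert) y) = ((norm (x + y))\<^sup>2 - (norm (x - y))\<^sup>2) / 4"
proof -
  have norm_sq: "(norm z)\<^sup>2 = Re (cinner z z)" for z :: 'a
    using norm_cinner[of z] cinner_nonneg[of z] by simp
  have expand: "cinner (x + y) (x + y) - cinner (x - y) (x - y) = 2 * cinner x y + 2 * cinner y x"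
    by (simp add: cinner_add_left cinner_add_right cinner_diff_left cinner_diff_right algebra_simps)
  have "Re (cinner y x) = Re (cinner x y)"
    by (subst cinner_commute) simp
  then have "Re (cinner (x + y) (x + y)) - Re (cinner (x - y) (x - y)) = 4 * Re (cinner x y)"
    by (simp flip: minus_complex.sel add: expand)
  then show ?thesis
    by (simp add: norm_sq)
qed

lemma cinner_polarization: "cinner (x::'a::complex_hilbert) y =
   complex_of_real (((norm (x + y))\<^sup>2 - (norm (x - y))\<^sup>2) / 4) +
   \<i> * complex_of_real (((norm (x + scaleC \<i> y))\<^sup>2 - (norm (x - scaleC \<i> y))\<^sup>2) / 4)"
proof -
  have "Re (cinner x (scaleC \<i> y)) = Im (cinner x y)"
    by (simp add: cinner_scaleC_right)
  then have Im: "Im (cinner x y) = ((norm (x + scaleC \<i> y))\<^sup>2 - (norm (x - scaleC \<i> y))\<^sup>2) / 4"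
    using Re_cinner_polarization[of x "scaleC \<i> y"] by simp
  show ?thesis
    by (simp only: complex_eq_iff Re_cinner_polarization[of x y] Im plus_complex.sel times_complex.sel
        Re_complex_of_real Im_complex_of_real complex_i_mult_minus) simp_all
qed

lemma isCont_cinner_left: "isCont (\<lambda>x. cinner (x::'a::complex_hilbert) y) x0"
  by (subst cinner_polarization) (intro continuous_intros; simp)

section \<open>The weighted sequence space\<close>

lemma linf_wI: "(\<And>k. cmod (\<alpha> k) * w k \<le> B) \<Longrightarrow> \<alpha> \<in> linf_w w"
  unfolding linf_w_def by auto

lemma linf_w_norm_upper: "\<alpha> \<in> linf_w w \<Longrightarrow> cmod (\<alpha> k) * w k \<le> linf_w_norm w \<alpha>"
  unfolding linf_w_norm_def linf_w_def by (rule cSUP_upper) (auto simp: bdd_above_def)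

lemma linf_w_norm_least: "(\<And>k. cmod (\<alpha> k) * w k \<le> B) \<Longrightarrow> linf_w_norm w \<alpha> \<le> B"
  unfolding linf_w_norm_def by (rule cSUP_least) auto

lemma linf_w_norm_zero [simp]: "linf_w_norm w (\<lambda>k. 0) = 0"
  unfolding linf_w_norm_def by simp

context
  fixes w :: "'i \<Rightarrow> real"
  assumes w_pos: "\<And>k. 0 < w k"
begin

lemma linf_w_norm_nonneg: "\<alpha> \<in> linf_w w \<Longrightarrow> 0 \<le> linf_w_norm w \<alpha>"
  using linf_w_norm_upper[of \<alpha> w undefined] w_pos[of undefined]
  by (meson mult_nonneg_nonneg norm_ge_zero less_imp_le order_trans)

lemma linf_w_norm_eq_0_iff:
  assumes "\<alpha> \<in> linf_w w"
  shows "linf_w_norm w \<alpha> = 0 \<longleftrightarrow> \<alpha> = (\<lambda>k. 0)"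
proof
  assume "linf_w_norm w \<alpha> = 0"
  then have "cmod (\<alpha> k) * w k \<le> 0" for k
    using linf_w_norm_upper[OF assms, of k] by simp
  then show "\<alpha> = (\<lambda>k. 0)"
    using w_pos by (simp add: fun_eq_iff mult_le_0_iff not_le[symmetric])
qed simp

lemma linf_w_add:
  assumes "\<alpha> \<in> linf_w w" "\<beta> \<in> linf_w w"
  shows "(\<lambda>k. \<alpha> k + \<beta> k) \<in> linf_w w"
    and "linf_w_norm w (\<lambda>k. \<alpha> k + \<beta> k) \<le> linf_w_norm w \<alpha> + linf_w_norm w \<beta>"
proof -
  have "cmod (\<alpha> k + \<beta> k) * w k \<le> linf_w_norm w \<alpha> + linf_w_norm w \<beta>" for k
  proof -
    have "cmod (\<alpha> k + \<beta> k) * w k \<le> (cmod (\<alpha> k) + cmod (\<beta> k)) * w k"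
      using w_pos[of k] by (intro mult_right_mono norm_triangle_ineq) simp
    also have "\<dots> \<le> linf_w_norm w \<alpha> + linf_w_norm w \<beta>"
      using linf_w_norm_upper[OF assms(1), of k] linf_w_norm_upper[OF assms(2), of k]
      by (simp add: distrib_right)
    finally show ?thesis .
  qed
  then show "(\<lambda>k. \<alpha> k + \<beta> k) \<in> linf_w w"
    and "linf_w_norm w (\<lambda>k. \<alpha> k + \<beta> k) \<le> linf_w_norm w \<alpha> + linf_w_norm w \<beta>"
    by (auto intro: linf_wI linf_w_norm_least)
qed

lemma linf_w_scale:
  assumes "\<alpha> \<in> linf_w w"
  shows "(\<lambda>k. c * \<alpha> k) \<in> linf_w w"
    and "linf_w_norm w (\<lambda>k. c * \<alpha> k) = cmod c * linf_w_norm w \<alpha>"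
proof -
  have bound: "cmod (c * \<alpha> k) * w k \<le> cmod c * linf_w_norm w \<alpha>" for k
    using linf_w_norm_upper[OF assms, of k] by (simp add: norm_mult mult.assoc mult_left_mono)
  then show scaled: "(\<lambda>k. c * \<alpha> k) \<in> linf_w w"
    by (rule linf_wI)
  have le: "linf_w_norm w (\<lambda>k. c * \<alpha> k) \<le> cmod c * linf_w_norm w \<alpha>"
    using bound by (rule linf_w_norm_least)
  show "linf_w_norm w (\<lambda>k. c * \<alpha> k) = cmod c * linf_w_norm w \<alpha>"
  proof (cases "c = 0")
    case True
    then show ?thesis by simp
  next
    case False
    have "cmod c * (cmod (\<alpha> k) * w k) \<le> linf_w_norm w (\<lambda>k. c * \<alpha> k)" for k
      using linf_w_norm_upper[OF scaled, of k] by (simp add: norm_mult mult.assoc)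
    then have "cmod (\<alpha> k) * w k \<le> linf_w_norm w (\<lambda>k. c * \<alpha> k) / cmod c" for k
      using False by (simp add: pos_le_divide_eq mult.commute)
    then have "linf_w_norm w \<alpha> \<le> linf_w_norm w (\<lambda>k. c * \<alpha> k) / cmod c"
      by (rule linf_w_norm_least)
    with False le show ?thesis by (simp add: field_simps)
  qed
qed

lemma linf_w_diff: "\<alpha> \<in> linf_w w \<Longrightarrow> \<beta> \<in> linf_w w \<Longrightarrow> (\<lambda>k. \<alpha> k - \<beta> k) \<in> linf_w w"
  using linf_w_add(1)[of \<alpha> "\<lambda>k. (-1) * \<beta> k"] linf_w_scale(1)[of \<beta> "-1"] by simp

lemma linf_w_norm_tendsto_pointwise:
  assumes "\<And>n. (\<lambda>k. a n k - \<alpha> k) \<in> linf_w w"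
    and "(\<lambda>n. linf_w_norm w (\<lambda>k. a n k - \<alpha> k)) \<longlonglongrightarrow> 0"
  shows "(\<lambda>n. a n k) \<longlonglongrightarrow> \<alpha> k"
proof -
  have "\<forall>n. norm (a n k - \<alpha> k) \<le> linf_w_norm w (\<lambda>k. a n k - \<alpha> k) / w k"
    using linf_w_norm_upper[OF assms(1)] w_pos[of k] by (simp add: pos_le_divide_eq)
  then have "(\<lambda>n. a n k - \<alpha> k) \<longlonglongrightarrow> 0"
    by (rule Lim_null_comparison[OF always_eventually tendsto_divide_zero[OF assms(2)]])
  then show ?thesis
    by (simp add: LIM_zero_iff)
qed

lemma linf_w_Cauchy_uniform_limit:
  fixes a :: "nat \<Rightarrow> 'i \<Rightarrow> complex"
  assumes a: "\<And>n. a n \<in> linf_w w"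
    and Cauchy: "\<forall>e>0. \<exists>M. \<forall>m\<ge>M. \<forall>n\<ge>M. linf_w_norm w (\<lambda>k. a m k - a n k) < e"
  obtains \<alpha> where "\<And>e. e > 0 \<Longrightarrow> \<exists>M. \<forall>n\<ge>M. \<forall>k. cmod (a n k - \<alpha> k) * w k \<le> e"
proof -
  have coord: "cmod (a m k - a n k) * w k \<le> linf_w_norm w (\<lambda>k. a m k - a n k)" for m n k
    by (rule linf_w_norm_upper[OF linf_w_diff[OF a a]])
  have "Cauchy (\<lambda>n. a n k)" for k
  proof (rule metric_CauchyI)
    fix e :: real
    assume "0 < e"
    then obtain M where M: "\<forall>m\<ge>M. \<forall>n\<ge>M. linf_w_norm w (\<lambda>k. a m k - a n k) < e * w k"
      using Cauchy w_pos[of k] by (meson mult_pos_pos)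
    have "dist (a m k) (a n k) < e" if "M \<le> m" "M \<le> n" for m n
    proof -
      have "cmod (a m k - a n k) * w k < e * w k"
        using coord[of m k n] M that by fastforce
      then show ?thesis
        using w_pos[of k] by (simp add: dist_norm)
    qed
    then show "\<exists>M. \<forall>m\<ge>M. \<forall>n\<ge>M. dist (a m k) (a n k) < e"
      by blast
  qed
  then have "\<exists>L. (\<lambda>n. a n k) \<longlonglongrightarrow> L" for k
    using Cauchy_convergent_iff convergent_def by blast
  then obtain \<alpha> where \<alpha>: "\<And>k. (\<lambda>n. a n k) \<longlonglongrightarrow> \<alpha> k"
    by metis
  have "\<exists>M. \<forall>n\<ge>M. \<forall>k. cmod (a n k - \<alpha> k) * w k \<le> e" if "e > 0" for e
  proof -
    obtain M where M: "\<forall>m\<ge>M. \<forall>n\<ge>M. linf_w_norm w (\<lambda>k. a m k - a n k) < e"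
      using Cauchy \<open>e > 0\<close> by blast
    have "cmod (a n k - \<alpha> k) * w k \<le> e" if "M \<le> n" for n k
    proof (rule tendsto_upperbound)
      show "(\<lambda>m. cmod (a n k - a m k) * w k) \<longlonglongrightarrow> cmod (a n k - \<alpha> k) * w k"
        by (intro tendsto_intros \<alpha>)
      show "\<forall>\<^sub>F m in sequentially. cmod (a n k - a m k) * w k \<le> e"
        using eventually_ge_at_top[of M]
      proof eventually_elim
        case (elim m)
        then show ?case
          using coord[of n k m] M \<open>M \<le> n\<close> by fastforce
      qed
    qed simp
    then show ?thesis by blast
  qed
  then show ?thesis
    by (rule that)
qed

lemma linf_w_complete:
  assumes a: "\<And>n. a n \<in> linf_w w"
    and Cauchy: "\<forall>e>0. \<exists>M. \<forall>m\<ge>M. \<forall>n\<ge>M. linf_w_norm w (\<lambda>k. a m k - a n k) < e"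
  shows "\<exists>\<alpha>\<in>linf_w w. (\<lambda>n. linf_w_norm w (\<lambda>k. a n k - \<alpha> k)) \<longlonglongrightarrow> 0"
proof -
  obtain \<alpha> where uniform: "\<And>e. e > 0 \<Longrightarrow> \<exists>M. \<forall>n\<ge>M. \<forall>k. cmod (a n k - \<alpha> k) * w k \<le> e"
    using linf_w_Cauchy_uniform_limit[OF a Cauchy] by blast
  obtain M1 where M1: "\<And>k. cmod (a M1 k - \<alpha> k) * w k \<le> 1"
    using uniform[of 1] by auto
  have "\<alpha> \<in> linf_w w"
  proof (rule linf_wI)
    fix k
    have "cmod (\<alpha> k) * w k \<le> (cmod (a M1 k) + cmod (a M1 k - \<alpha> k)) * w k"
      using w_pos[of k] by (intro mult_right_mono) (auto simp: norm_triangle_sub norm_minus_commute)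
    also have "\<dots> \<le> linf_w_norm w (a M1) + 1"
      using linf_w_norm_upper[OF a, of M1 k] M1[of k] by (simp add: distrib_right)
    finally show "cmod (\<alpha> k) * w k \<le> linf_w_norm w (a M1) + 1" .
  qed
  moreover have "(\<lambda>n. linf_w_norm w (\<lambda>k. a n k - \<alpha> k)) \<longlonglongrightarrow> 0"
  proof (rule LIMSEQ_I)
    fix r :: real
    assume "0 < r"
    then obtain M where M: "\<forall>n\<ge>M. \<forall>k. cmod (a n k - \<alpha> k) * w k \<le> r / 2"
      using uniform[of "r / 2"] by auto
    have "norm (linf_w_norm w (\<lambda>k. a n k - \<alpha> k)) < r" if "M \<le> n" for n
      using linf_w_norm_least[of "\<lambda>k. a n k - \<alpha> k" w "r / 2"] M that \<open>0 < r\<close>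
        linf_w_norm_nonneg[OF linf_w_diff[OF a \<open>\<alpha> \<in> linf_w w\<close>]] by auto
    then show "\<exists>no. \<forall>n\<ge>no. norm (linf_w_norm w (\<lambda>k. a n k - \<alpha> k) - 0) < r"
      by auto
  qed
  ultimately show ?thesis by blast
qed

lemma banach_fun_space_closed_subspace:
  assumes V: "closed_subspace_linf_w w V"
  shows "banach_fun_space V (linf_w_norm w)"
proof -
  have sub: "V \<subseteq> linf_w w"
    using V unfolding closed_subspace_linf_w_def by blast
  have "(\<lambda>x. 0) \<in> V"
    and "\<forall>f\<in>V. \<forall>g\<in>V. (\<lambda>x. f x + g x) \<in> V"
    and "\<forall>c. \<forall>f\<in>V. (\<lambda>x. c * f x) \<in> V"
    using V unfolding closed_subspace_linf_w_def by - (elim conjE; assumption)+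
  moreover have "\<forall>f\<in>V. 0 \<le> linf_w_norm w f \<and> (linf_w_norm w f = 0 \<longleftrightarrow> f = (\<lambda>x. 0))"
    using sub linf_w_norm_nonneg linf_w_norm_eq_0_iff by blast
  moreover have "\<forall>c. \<forall>f\<in>V. linf_w_norm w (\<lambda>x. c * f x) = cmod c * linf_w_norm w f"
    using sub linf_w_scale(2) by blast
  moreover have "\<forall>f\<in>V. \<forall>g\<in>V. linf_w_norm w (\<lambda>x. f x + g x) \<le> linf_w_norm w f + linf_w_norm w g"
    using sub linf_w_add(2) by blast
  moreover have "\<forall>u. (\<forall>n. u n \<in> V) \<and>
      (\<forall>e>0. \<exists>M. \<forall>m\<ge>M. \<forall>n\<ge>M. linf_w_norm w (\<lambda>x. u m x - u n x) < e) \<longrightarrow>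
      (\<exists>f\<in>V. (\<lambda>n. linf_w_norm w (\<lambda>x. u n x - f x)) \<longlonglongrightarrow> 0)"
  proof (intro allI impI, elim conjE)
    fix u :: "nat \<Rightarrow> 'i \<Rightarrow> complex"
    assume "\<forall>n. u n \<in> V"
      and Cauchy: "\<forall>e>0. \<exists>M. \<forall>m\<ge>M. \<forall>n\<ge>M. linf_w_norm w (\<lambda>x. u m x - u n x) < e"
    then have u: "\<And>n. u n \<in> V" and "\<And>n. u n \<in> linf_w w"
      using sub by blast+
    then obtain \<alpha> where "\<alpha> \<in> linf_w w" "(\<lambda>n. linf_w_norm w (\<lambda>k. u n k - \<alpha> k)) \<longlonglongrightarrow> 0"
      using linf_w_complete Cauchy by blast
    with V u show "\<exists>f\<in>V. (\<lambda>n. linf_w_norm w (\<lambda>x. u n x - f x)) \<longlonglongrightarrow> 0"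
      unfolding closed_subspace_linf_w_def by blast
  qed
  ultimately show ?thesis
    unfolding banach_fun_space_def by - (intro conjI; assumption)
qed

end

lemma banach_fun_space_coefficient_preimage:
  fixes e :: "'i \<Rightarrow> 'b" and D :: "('b \<Rightarrow> complex) set" and V :: "('i \<Rightarrow> complex) set"
  assumes V: "banach_fun_space V N"
    and D_zero: "(\<lambda>x. 0) \<in> D"
    and D_add: "\<And>f g. f \<in> D \<Longrightarrow> g \<in> D \<Longrightarrow> (\<lambda>x. f x + g x) \<in> D"
    and D_scale: "\<And>c f. f \<in> D \<Longrightarrow> (\<lambda>x. c * f x) \<in> D"
    and D_inj: "\<And>f g. f \<in> D \<Longrightarrow> g \<in> D \<Longrightarrow> (\<And>k. f (e k) = g (e k)) \<Longrightarrow> f = g"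
    and D_onto: "\<And>\<alpha>. \<alpha> \<in> V \<Longrightarrow> \<exists>f\<in>D. (\<lambda>k. f (e k)) = \<alpha>"
  shows "banach_fun_space {f \<in> D. (\<lambda>k. f (e k)) \<in> V} (\<lambda>f. N (\<lambda>k. f (e k)))"
proof -
  let ?S = "{f \<in> D. (\<lambda>k. f (e k)) \<in> V}"
  have V_zero: "(\<lambda>x. 0) \<in> V"
    and V_add: "\<forall>\<alpha>\<in>V. \<forall>\<beta>\<in>V. (\<lambda>x. \<alpha> x + \<beta> x) \<in> V"
    and V_scale: "\<forall>c. \<forall>\<alpha>\<in>V. (\<lambda>x. c * \<alpha> x) \<in> V"
    and N_pos: "\<forall>\<alpha>\<in>V. 0 \<le> N \<alpha> \<and> (N \<alpha> = 0 \<longleftrightarrow> \<alpha> = (\<lambda>x. 0))"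
    and N_scale: "\<forall>c. \<forall>\<alpha>\<in>V. N (\<lambda>x. c * \<alpha> x) = cmod c * N \<alpha>"
    and N_triangle: "\<forall>\<alpha>\<in>V. \<forall>\<beta>\<in>V. N (\<lambda>x. \<alpha> x + \<beta> x) \<le> N \<alpha> + N \<beta>"
    and V_complete: "\<forall>a. (\<forall>n. a n \<in> V) \<and> (\<forall>\<epsilon>>0. \<exists>M. \<forall>m\<ge>M. \<forall>n\<ge>M. N (\<lambda>x. a m x - a n x) < \<epsilon>) \<longrightarrow>
        (\<exists>\<alpha>\<in>V. (\<lambda>n. N (\<lambda>x. a n x - \<alpha> x)) \<longlonglongrightarrow> 0)"
    using V by (simp_all add: banach_fun_space_def)
  have zero_iff: "(\<lambda>k. f (e k)) = (\<lambda>k. 0) \<longleftrightarrow> f = (\<lambda>x. 0)" if "f \<in> D" for f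
    using D_inj[OF that D_zero] by (auto simp: fun_eq_iff)
  have "\<forall>f\<in>?S. \<forall>g\<in>?S. (\<lambda>x. f x + g x) \<in> ?S"
    using D_add V_add by simp
  moreover have "\<forall>c. \<forall>f\<in>?S. (\<lambda>x. c * f x) \<in> ?S"
    using D_scale V_scale by simp
  moreover have "\<forall>f\<in>?S. 0 \<le> N (\<lambda>k. f (e k)) \<and> (N (\<lambda>k. f (e k)) = 0 \<longleftrightarrow> f = (\<lambda>x. 0))"
    using N_pos zero_iff by simp
  moreover have "\<forall>c. \<forall>f\<in>?S. N (\<lambda>k. c * f (e k)) = cmod c * N (\<lambda>k. f (e k))"
    using N_scale by simp
  moreover have "\<forall>f\<in>?S. \<forall>g\<in>?S. N (\<lambda>k. f (e k) + g (e k)) \<le> N (\<lambda>k. f (e k)) + N (\<lambda>k. g (e k))"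
    using N_triangle by simp
  moreover have "\<exists>f\<in>?S. (\<lambda>n. N (\<lambda>k. u n (e k) - f (e k))) \<longlonglongrightarrow> 0"
    if u: "\<forall>n. u n \<in> ?S"
      and Cauchy: "\<forall>\<epsilon>>0. \<exists>M. \<forall>m\<ge>M. \<forall>n\<ge>M. N (\<lambda>k. u m (e k) - u n (e k)) < \<epsilon>" for u
  proof -
    obtain \<alpha> where "\<alpha> \<in> V" and lim: "(\<lambda>n. N (\<lambda>k. u n (e k) - \<alpha> k)) \<longlonglongrightarrow> 0"
      using V_complete[rule_format, of "\<lambda>n k. u n (e k)"] u Cauchy by blast
    moreover obtain f where "f \<in> D" "(\<lambda>k. f (e k)) = \<alpha>"
      using D_onto \<open>\<alpha> \<in> V\<close> by blast
    ultimately show ?thesis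
      by auto
  qed
  ultimately show ?thesis
    unfolding banach_fun_space_def using D_zero V_zero by simp
qed

section \<open>The completion and the space \<open>H\<^sup>\<infinity>_w\<close>\<close>

lemma dual_frame_in_H00: "\<psi>t k \<in> H00 \<psi>t"
  unfolding H00_def by (intro CollectI exI[of _ "{k}"] exI[of _ "\<lambda>_. 1"]) (simp add: scaleC_one)

lemma H00_sumI: "finite F \<Longrightarrow> (\<Sum>k\<in>F. scaleC (c k) (\<psi>t k)) \<in> H00 \<psi>t"
  unfolding H00_def by blast

lemma H00_zero: "0 \<in> H00 \<psi>t"
  using H00_sumI[of "{}"] by simp

lemma H00_scaleC_add:
  assumes "u \<in> H00 \<psi>t" "v \<in> H00 \<psi>t"
  shows "scaleC a u + scaleC b v \<in> H00 (\<psi>t::'i \<Rightarrow> 'a::complex_hilbert)"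
proof -
  obtain F1 c1 where F1: "finite F1" "u = (\<Sum>k\<in>F1. scaleC (c1 k) (\<psi>t k))"
    using assms(1) unfolding H00_def by blast
  obtain F2 c2 where F2: "finite F2" "v = (\<Sum>k\<in>F2. scaleC (c2 k) (\<psi>t k))"
    using assms(2) unfolding H00_def by blast
  have extend: "(\<Sum>k\<in>F1 \<union> F2. scaleC (if k \<in> G then d k else 0) (\<psi>t k)) = (\<Sum>k\<in>G. scaleC (d k) (\<psi>t k))"
    if "G \<subseteq> F1 \<union> F2" for G d
    using that F1(1) F2(1) by (intro sum.mono_neutral_cong_right) auto
  let ?c = "\<lambda>k. (if k \<in> F1 then a * c1 k else 0) + (if k \<in> F2 then b * c2 k else 0)"
  have "(\<Sum>k\<in>F1 \<union> F2. scaleC (?c k) (\<psi>t k))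
      = (\<Sum>k\<in>F1. scaleC (a * c1 k) (\<psi>t k)) + (\<Sum>k\<in>F2. scaleC (b * c2 k) (\<psi>t k))"
    by (simp add: scaleC_add_left sum.distrib extend)
  also have "\<dots> = scaleC a u + scaleC b v"
    by (simp add: F1(2) F2(2) scaleC_sum_right scaleC_scaleC)
  finally show ?thesis
    using H00_sumI[of "F1 \<union> F2" ?c \<psi>t] F1(1) F2(1) by simp
qed

lemma Hbar_zero: "(\<lambda>x. 0) \<in> Hbar \<psi>t"
  unfolding Hbar_def by auto

lemma Hbar_add: "\<phi> \<in> Hbar \<psi>t \<Longrightarrow> \<theta> \<in> Hbar \<psi>t \<Longrightarrow> (\<lambda>x. \<phi> x + \<theta> x) \<in> Hbar \<psi>t"
  unfolding Hbar_def by (auto simp: algebra_simps)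

lemma Hbar_scale: "\<phi> \<in> Hbar \<psi>t \<Longrightarrow> (\<lambda>x. c * \<phi> x) \<in> Hbar \<psi>t"
  unfolding Hbar_def by (auto simp: algebra_simps)

lemma Hbar_sum:
  assumes "\<phi> \<in> Hbar \<psi>t" "finite F"
  shows "\<phi> (\<Sum>k\<in>F. scaleC (c k) (\<psi>t k::'a::complex_hilbert)) = (\<Sum>k\<in>F. cnj (c k) * \<phi> (\<psi>t k))"
  using assms(2)
proof (induction F rule: finite_induct)
  case empty
  have "\<phi> (scaleC 0 0 + scaleC 0 0) = cnj 0 * \<phi> 0 + cnj 0 * \<phi> 0"
    using assms(1) H00_zero[of \<psi>t] unfolding Hbar_def by blast
  then show ?case by simp
next
  case (insert x F)
  have "\<phi> (\<Sum>k\<in>insert x F. scaleC (c k) (\<psi>t k))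
      = \<phi> (scaleC (c x) (\<psi>t x) + scaleC 1 (\<Sum>k\<in>F. scaleC (c k) (\<psi>t k)))"
    using insert by (simp add: scaleC_one)
  also have "\<dots> = cnj (c x) * \<phi> (\<psi>t x) + cnj 1 * \<phi> (\<Sum>k\<in>F. scaleC (c k) (\<psi>t k))"
    using assms(1) dual_frame_in_H00[of \<psi>t x] H00_sumI[OF insert(1), of c \<psi>t]
    unfolding Hbar_def by blast
  finally show ?case
    using insert by simp
qed

lemma Hbar_eqI:
  assumes "\<phi> \<in> Hbar \<psi>t" "\<theta> \<in> Hbar \<psi>t" "\<And>k. \<phi> (\<psi>t k) = \<theta> (\<psi>t k)"
  shows "\<phi> = \<theta>"
proof
  fix v :: 'a
  show "\<phi> v = \<theta> v"
  proof (cases "v \<in> H00 \<psi>t")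
    case True
    then obtain F c where "finite F" "v = (\<Sum>k\<in>F. scaleC (c k) (\<psi>t k))"
      unfolding H00_def by blast
    then show ?thesis
      using Hbar_sum[OF assms(1)] Hbar_sum[OF assms(2)] assms(3) by simp
  next
    case False
    then show ?thesis
      using assms(1,2) unfolding Hbar_def by auto
  qed
qed

lemma Hbar_pointwise_limit:
  assumes "\<And>v. v \<in> H00 \<psi>t \<Longrightarrow> (\<lambda>n. cinner (fs n) v) \<longlonglongrightarrow> L v"
  shows "(\<lambda>v. if v \<in> H00 \<psi>t then L v else 0) \<in> Hbar (\<psi>t :: 'i \<Rightarrow> 'a::complex_hilbert)"
  unfolding Hbar_def
proof (intro CollectI conjI ballI allI impI)
  fix u v a b
  assume uv: "u \<in> H00 \<psi>t" "v \<in> H00 \<psi>t"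
  have comb: "scaleC a u + scaleC b v \<in> H00 \<psi>t"
    using H00_scaleC_add[OF uv] .
  have "(\<lambda>n. cinner (fs n) (scaleC a u + scaleC b v)) \<longlonglongrightarrow> cnj a * L u + cnj b * L v"
    unfolding cinner_add_right cinner_scaleC_right by (intro tendsto_intros assms uv)
  with assms[OF comb] have "L (scaleC a u + scaleC b v) = cnj a * L u + cnj b * L v"
    using LIMSEQ_unique by blast
  then show "(if scaleC a u + scaleC b v \<in> H00 \<psi>t then L (scaleC a u + scaleC b v) else 0) =
       cnj a * (if u \<in> H00 \<psi>t then L u else 0) + cnj b * (if v \<in> H00 \<psi>t then L v else 0)"
    using comb uv by simp
qed auto

lemma Hinf_wI:
  assumes "\<phi> \<in> Hbar \<psi>t" "\<And>v. v \<in> H00 \<psi>t \<Longrightarrow> (\<lambda>n. cinner (fs n) v) \<longlonglongrightarrow> \<phi> v"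
    "\<And>n k. cmod (cinner (fs n) (\<psi>t k)) * w k \<le> B"
  shows "\<phi> \<in> Hinf_w w \<psi>t"
  unfolding Hinf_w_def embed_H_def using assms by (intro CollectI conjI exI[of _ fs]) auto

lemma Hinf_wE:
  assumes "\<phi> \<in> Hinf_w w \<psi>t"
  obtains fs B where "\<phi> \<in> Hbar \<psi>t" "\<And>v. v \<in> H00 \<psi>t \<Longrightarrow> (\<lambda>n. cinner (fs n) v) \<longlonglongrightarrow> \<phi> v"
    "\<And>n k. cmod (cinner (fs n) (\<psi>t k)) * w k \<le> B"
proof -
  from assms obtain fs B where "\<phi> \<in> Hbar \<psi>t" "\<forall>v\<in>H00 \<psi>t. (\<lambda>n. embed_H \<psi>t (fs n) v) \<longlonglongrightarrow> \<phi> v"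
    "\<forall>n k. cmod (cinner (fs n) (\<psi>t k)) * w k \<le> B"
    unfolding Hinf_w_def by blast
  then show ?thesis
    using that[of fs B] by (auto simp: embed_H_def)
qed

lemma coeff_op_Hinf_w:
  assumes "\<phi> \<in> Hinf_w w \<psi>t"
  shows "coeff_op \<psi>t \<phi> \<in> linf_w w"
proof -
  obtain fs B where conv: "\<And>v. v \<in> H00 \<psi>t \<Longrightarrow> (\<lambda>n. cinner (fs n) v) \<longlonglongrightarrow> \<phi> v"
    and bound: "\<And>n k. cmod (cinner (fs n) (\<psi>t k)) * w k \<le> B"
    using Hinf_wE[OF assms] by metis
  show ?thesis
  proof (rule linf_wI)
    fix k
    have "(\<lambda>n. cmod (cinner (fs n) (\<psi>t k)) * w k) \<longlonglongrightarrow> cmod (\<phi> (\<psi>t k)) * w k"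
      by (intro tendsto_intros conv dual_frame_in_H00)
    then show "cmod (coeff_op \<psi>t \<phi> k) * w k \<le> B"
      unfolding coeff_op_def by (rule tendsto_upperbound) (use bound in auto)
  qed
qed

section \<open>The cross Gram matrix\<close>

lemma infsum_dominated_convergence:
  fixes s :: "nat \<Rightarrow> 'i \<Rightarrow> complex" and g :: "'i \<Rightarrow> real"
  assumes g: "g summable_on UNIV"
    and dominated: "\<And>n l. cmod (s n l) \<le> g l"
    and lim: "\<And>l. (\<lambda>n. s n l) \<longlonglongrightarrow> f l"
  shows "(\<lambda>n. infsum (s n) UNIV) \<longlonglongrightarrow> infsum f UNIV"
proof -
  have "g x = norm (g x)" for x
    using order_trans[OF norm_ge_zero dominated[of 0 x]] by simp
  then have "(\<lambda>x. norm (g x)) summable_on UNIV"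
    using g by simp
  then have g_int: "integrable (count_space UNIV) g"
    using abs_summable_equivalent unfolding Infinite_Set_Sum.abs_summable_on_def by blast
  have dominated': "\<And>n. AE x in count_space UNIV. norm (s n x) \<le> g x"
    and lim': "AE x in count_space UNIV. (\<lambda>n. s n x) \<longlonglongrightarrow> f x"
    using dominated lim by simp_all
  have "integrable (count_space UNIV) f"
    by (rule integrable_dominated_convergence[OF _ _ g_int lim' dominated']) auto
  moreover have "integrable (count_space UNIV) (s n)" for n
    by (rule integrable_dominated_convergence2[OF _ _ g_int lim' dominated']) auto
  moreover have "(\<lambda>n. integral\<^sup>L (count_space UNIV) (s n)) \<longlonglongrightarrow> integral\<^sup>L (count_space UNIV) f"
    by (rule integral_dominated_convergence[OF _ _ g_int lim' dominated']) auto
  moreover have "integral\<^sup>L (count_space UNIV) h = infsum h UNIV"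
    if "integrable (count_space UNIV) h" for h :: "'i \<Rightarrow> complex"
    using infsetsum_infsum[of h UNIV] that
    unfolding Infinite_Set_Sum.abs_summable_on_def infsetsum_def by simp
  ultimately show ?thesis
    by simp
qed

lemma tendsto_sum_to_nat_on_infsum:
  assumes "countable (UNIV :: 'i set)" and "(h :: 'i \<Rightarrow> complex) summable_on UNIV"
  shows "(\<lambda>N. sum h (to_nat_on UNIV -` {..<N})) \<longlonglongrightarrow> infsum h UNIV"
proof -
  have inj: "inj (to_nat_on (UNIV :: 'i set))"
    using assms(1) by blast
  have fin: "finite (to_nat_on (UNIV :: 'i set) -` {..<N})" for N
    by (rule finite_vimageI[OF _ inj]) simp
  have "filterlim (\<lambda>N. to_nat_on UNIV -` {..<N}) (finite_subsets_at_top (UNIV :: 'i set)) at_top"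
    unfolding filterlim_finite_subsets_at_top
  proof (safe, goal_cases)
    case (1 X)
    then obtain n where n: "to_nat_on UNIV ` X \<subseteq> {..<n}"
      by (metis finite_imageI finite_nat_iff_bounded image_subset_iff lessThan_iff subsetI)
    show ?case
      using eventually_ge_at_top[of n] by eventually_elim (use n fin in auto)
  qed
  then show ?thesis
    by (rule filterlim_compose[OF infsum_tendsto[OF assms(2)]])
qed

lemma dual_frame_coefficients_reproduced:
  assumes "is_dual_frame \<psi> (\<psi>t :: 'i \<Rightarrow> 'a::complex_hilbert)"
  shows "((\<lambda>l. cinner (\<psi> l) (\<psi>t k) * cinner f (\<psi>t l)) has_sum cinner f (\<psi>t k)) UNIV"
proof -
  have "((\<lambda>l. scaleC (cinner f (\<psi>t l)) (\<psi> l)) has_sum f) UNIV"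
    using assms unfolding is_dual_frame_def by blast
  moreover have "Modules.additive (\<lambda>x. cinner (x::'a) (\<psi>t k))"
    by (simp add: Modules.additive_def cinner_add_left)
  ultimately have "(((\<lambda>x. cinner x (\<psi>t k)) \<circ> (\<lambda>l. scaleC (cinner f (\<psi>t l)) (\<psi> l))) has_sum cinner f (\<psi>t k)) UNIV"
    using has_sum_comm_additive isCont_cinner_left isCont_def by blast
  then show ?thesis
    by (simp add: o_def cinner_scaleC_left mult.commute)
qed

locale gram_schur_bound =
  fixes w :: "'i \<Rightarrow> real" and \<psi>t \<psi> :: "'i \<Rightarrow> 'a::complex_hilbert" and M :: real
  assumes w_pos: "\<And>k. 0 < w k"
    and row_summable: "\<And>k. (\<lambda>l. cmod (cinner (\<psi> l) (\<psi>t k)) * w k / w l) summable_on UNIV"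
    and row_sum_le: "\<And>k. (\<Sum>\<^sub>\<infinity>l. cmod (cinner (\<psi> l) (\<psi>t k)) * w k / w l) \<le> M"
begin

lemma gram_terms_abs_summable:
  assumes "\<alpha> \<in> linf_w w"
  shows "(\<lambda>l. norm (cinner (\<psi> l) (\<psi>t k) * \<alpha> l)) summable_on UNIV"
    and "(\<Sum>\<^sub>\<infinity>l. norm (cinner (\<psi> l) (\<psi>t k) * \<alpha> l)) * w k \<le> M * linf_w_norm w \<alpha>"
proof -
  let ?N = "linf_w_norm w \<alpha>"
  let ?g = "\<lambda>l. cmod (cinner (\<psi> l) (\<psi>t k)) * w k / w l * (?N / w k)"
  have g: "?g summable_on UNIV"
    by (rule summable_on_cmult_left[OF row_summable])
  have le: "norm (cinner (\<psi> l) (\<psi>t k) * \<alpha> l) \<le> ?g l" for l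
  proof -
    have "cmod (\<alpha> l) \<le> ?N / w l"
      using linf_w_norm_upper[OF assms, of l] w_pos[of l] by (simp add: pos_le_divide_eq)
    then have "norm (cinner (\<psi> l) (\<psi>t k) * \<alpha> l) \<le> cmod (cinner (\<psi> l) (\<psi>t k)) * (?N / w l)"
      unfolding norm_mult by (rule mult_left_mono) simp
    also have "\<dots> = ?g l"
      using w_pos[of k] by simp
    finally show ?thesis .
  qed
  show summable: "(\<lambda>l. norm (cinner (\<psi> l) (\<psi>t k) * \<alpha> l)) summable_on UNIV"
    by (rule summable_on_comparison_test[OF g]) (use le in auto)
  have "(\<Sum>\<^sub>\<infinity>l. norm (cinner (\<psi> l) (\<psi>t k) * \<alpha> l)) \<le> (\<Sum>\<^sub>\<infinity>l. ?g l)"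
    by (rule infsum_mono[OF summable g le])
  also have "\<dots> = (\<Sum>\<^sub>\<infinity>l. cmod (cinner (\<psi> l) (\<psi>t k)) * w k / w l) * (?N / w k)"
    by (rule infsum_cmult_left) (use row_summable in auto)
  also have "\<dots> \<le> M * (?N / w k)"
    using row_sum_le linf_w_norm_nonneg[OF w_pos assms] w_pos[of k] by (intro mult_right_mono) auto
  finally show "(\<Sum>\<^sub>\<infinity>l. norm (cinner (\<psi> l) (\<psi>t k) * \<alpha> l)) * w k \<le> M * ?N"
    using w_pos[of k] by (simp add: pos_le_divide_eq)
qed

lemma gram_terms_summable:
  "\<alpha> \<in> linf_w w \<Longrightarrow> (\<lambda>l. cinner (\<psi> l) (\<psi>t k) * \<alpha> l) summable_on UNIV"
  by (rule abs_summable_summable[OF gram_terms_abs_summable(1)])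

lemma norm_gram_le:
  assumes "\<alpha> \<in> linf_w w"
  shows "cmod (gram \<psi>t \<psi> \<alpha> k) * w k \<le> M * linf_w_norm w \<alpha>"
proof -
  have "cmod (gram \<psi>t \<psi> \<alpha> k) \<le> (\<Sum>\<^sub>\<infinity>l. norm (cinner (\<psi> l) (\<psi>t k) * \<alpha> l))"
    unfolding gram_def by (rule norm_infsum_bound[OF gram_terms_abs_summable(1)[OF assms]])
  then have "cmod (gram \<psi>t \<psi> \<alpha> k) * w k \<le> (\<Sum>\<^sub>\<infinity>l. norm (cinner (\<psi> l) (\<psi>t k) * \<alpha> l)) * w k"
    using w_pos[of k] by (intro mult_right_mono) auto
  with gram_terms_abs_summable(2)[OF assms, of k] show ?thesis
    by linarith
qed

lemma norm_gram_partial_sum_le: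
  assumes \<alpha>: "\<alpha> \<in> linf_w w" and "finite F"
  shows "cmod (\<Sum>l\<in>F. cinner (\<psi> l) (\<psi>t k) * \<alpha> l) * w k \<le> M * linf_w_norm w \<alpha>"
proof -
  have "cmod (\<Sum>l\<in>F. cinner (\<psi> l) (\<psi>t k) * \<alpha> l) \<le> (\<Sum>\<^sub>\<infinity>l\<in>F. norm (cinner (\<psi> l) (\<psi>t k) * \<alpha> l))"
    using \<open>finite F\<close> by (simp add: norm_sum)
  also have "\<dots> \<le> (\<Sum>\<^sub>\<infinity>l. norm (cinner (\<psi> l) (\<psi>t k) * \<alpha> l))"
    using \<open>finite F\<close> gram_terms_abs_summable(1)[OF \<alpha>] by (intro infsum_mono_neutral) auto
  finally have "cmod (\<Sum>l\<in>F. cinner (\<psi> l) (\<psi>t k) * \<alpha> l) * w k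
      \<le> (\<Sum>\<^sub>\<infinity>l. norm (cinner (\<psi> l) (\<psi>t k) * \<alpha> l)) * w k"
    using w_pos[of k] by (intro mult_right_mono) auto
  then show ?thesis
    using gram_terms_abs_summable(2)[OF \<alpha>, of k] by (rule order_trans)
qed

lemma gram_add_scaled:
  assumes "\<alpha> \<in> linf_w w" "\<beta> \<in> linf_w w"
  shows "gram \<psi>t \<psi> (\<lambda>l. \<alpha> l + c * \<beta> l) = (\<lambda>k. gram \<psi>t \<psi> \<alpha> k + c * gram \<psi>t \<psi> \<beta> k)"
proof
  fix k
  have "gram \<psi>t \<psi> (\<lambda>l. \<alpha> l + c * \<beta> l) k =
      (\<Sum>\<^sub>\<infinity>l. cinner (\<psi> l) (\<psi>t k) * \<alpha> l + c * (cinner (\<psi> l) (\<psi>t k) * \<beta> l))"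
    unfolding gram_def by (simp add: algebra_simps)
  also have "\<dots> = gram \<psi>t \<psi> \<alpha> k + c * gram \<psi>t \<psi> \<beta> k"
    unfolding gram_def
    by (simp add: infsum_add infsum_cmult_right summable_on_cmult_right gram_terms_summable assms)
  finally show "gram \<psi>t \<psi> (\<lambda>l. \<alpha> l + c * \<beta> l) k = gram \<psi>t \<psi> \<alpha> k + c * gram \<psi>t \<psi> \<beta> k" .
qed

lemma gram_fixed_points_closed_subspace:
  "closed_subspace_linf_w w {\<alpha> \<in> linf_w w. gram \<psi>t \<psi> \<alpha> = \<alpha>}" (is "closed_subspace_linf_w w ?V")
  unfolding closed_subspace_linf_w_def
proof (intro conjI ballI allI impI)
  show "?V \<subseteq> linf_w w"
    by blast
  have zero: "(\<lambda>k. 0) \<in> linf_w w" "gram \<psi>t \<psi> (\<lambda>k. 0) = (\<lambda>k. 0)"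
    by (auto intro: linf_wI[of _ _ 0] simp: gram_def)
  then show "(\<lambda>k. 0) \<in> ?V"
    by simp
  fix c \<alpha> \<beta>
  assume "\<alpha> \<in> ?V" and "\<beta> \<in> ?V"
  then show "(\<lambda>k. \<alpha> k + \<beta> k) \<in> ?V"
    and "(\<lambda>k. c * \<alpha> k) \<in> ?V"
    using gram_add_scaled[of \<alpha> \<beta> 1] gram_add_scaled[of "\<lambda>k. 0" \<alpha> c] zero
      linf_w_add(1)[OF w_pos] linf_w_scale(1)[OF w_pos] by auto
next
  fix \<alpha>s \<alpha>
  assume "(\<forall>n. \<alpha>s n \<in> ?V) \<and> \<alpha> \<in> linf_w w \<and>
    (\<lambda>n. linf_w_norm w (\<lambda>k. \<alpha>s n k - \<alpha> k)) \<longlonglongrightarrow> 0"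
  then have \<alpha>s: "\<And>n. \<alpha>s n \<in> linf_w w" "\<And>n. gram \<psi>t \<psi> (\<alpha>s n) = \<alpha>s n" and \<alpha>: "\<alpha> \<in> linf_w w"
    and lim: "(\<lambda>n. linf_w_norm w (\<lambda>k. \<alpha>s n k - \<alpha> k)) \<longlonglongrightarrow> 0"
    by auto
  have diff: "(\<lambda>k. \<alpha>s n k - \<alpha> k) \<in> linf_w w" for n
    by (rule linf_w_diff[OF w_pos \<alpha>s(1) \<alpha>])
  have "gram \<psi>t \<psi> \<alpha> k = \<alpha> k" for k
  proof (rule LIMSEQ_unique)
    show "(\<lambda>n. \<alpha>s n k) \<longlonglongrightarrow> \<alpha> k"
      by (rule linf_w_norm_tendsto_pointwise[OF w_pos diff lim])
    \<comment> \<open>The Gram matrix is bounded, hence continuous coordinatewise.\<close>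
    have "gram \<psi>t \<psi> (\<lambda>l. \<alpha>s n l - \<alpha> l) k = \<alpha>s n k - gram \<psi>t \<psi> \<alpha> k" for n
      using gram_add_scaled[OF \<alpha>s(1)[of n] \<alpha>, of "-1"] \<alpha>s(2)[of n] by (simp add: fun_eq_iff)
    then have "norm (\<alpha>s n k - gram \<psi>t \<psi> \<alpha> k) * w k \<le> M * linf_w_norm w (\<lambda>l. \<alpha>s n l - \<alpha> l)" for n
      using norm_gram_le[OF diff, of n k] by simp
    then have "\<forall>n. norm (\<alpha>s n k - gram \<psi>t \<psi> \<alpha> k) \<le> M * linf_w_norm w (\<lambda>l. \<alpha>s n l - \<alpha> l) / w k"
      using w_pos[of k] by (simp add: pos_le_divide_eq)
    moreover have "(\<lambda>n. M * linf_w_norm w (\<lambda>l. \<alpha>s n l - \<alpha> l) / w k) \<longlonglongrightarrow> 0"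
      using tendsto_divide_zero[OF tendsto_mult_right_zero[OF lim]] .
    ultimately have "(\<lambda>n. \<alpha>s n k - gram \<psi>t \<psi> \<alpha> k) \<longlonglongrightarrow> 0"
      by (rule Lim_null_comparison[OF always_eventually])
    then show "(\<lambda>n. \<alpha>s n k) \<longlonglongrightarrow> gram \<psi>t \<psi> \<alpha> k"
      by (simp add: LIM_zero_iff)
  qed
  with \<alpha> show "\<alpha> \<in> ?V"
    by auto
qed

lemma coeff_op_gram_fixed:
  assumes dual: "is_dual_frame \<psi> \<psi>t" and \<phi>: "\<phi> \<in> Hinf_w w \<psi>t"
  shows "gram \<psi>t \<psi> (coeff_op \<psi>t \<phi>) = coeff_op \<psi>t \<phi>"
proof
  fix k
  obtain fs B where conv: "\<And>v. v \<in> H00 \<psi>t \<Longrightarrow> (\<lambda>n. cinner (fs n) v) \<longlonglongrightarrow> \<phi> v"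
    and bound: "\<And>n k. cmod (cinner (fs n) (\<psi>t k)) * w k \<le> B"
    using Hinf_wE[OF \<phi>] by metis
  let ?G = "\<lambda>l. cinner (\<psi> l) (\<psi>t k)"
  let ?g = "\<lambda>l. cmod (?G l) * w k / w l * (B / w k)"
  have dominated: "cmod (?G l * cinner (fs n) (\<psi>t l)) \<le> ?g l" for n l
  proof -
    have "cmod (cinner (fs n) (\<psi>t l)) \<le> B / w l"
      using bound[of n l] w_pos[of l] by (simp add: pos_le_divide_eq)
    then have "cmod (?G l * cinner (fs n) (\<psi>t l)) \<le> cmod (?G l) * (B / w l)"
      unfolding norm_mult by (rule mult_left_mono) simp
    also have "\<dots> = ?g l"
      using w_pos[of k] by simp
    finally show ?thesis .
  qed
  \<comment> \<open>Each \<open>\<langle>f\<^sub>n, \<psi>t\<^sub>k\<rangle>\<close> is a Gram row applied to the coefficients of \<open>f\<^sub>n\<close>; pass to the limit.\<close>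
  have "(\<lambda>n. \<Sum>\<^sub>\<infinity>l. ?G l * cinner (fs n) (\<psi>t l)) \<longlonglongrightarrow> (\<Sum>\<^sub>\<infinity>l. ?G l * coeff_op \<psi>t \<phi> l)"
    using summable_on_cmult_left[OF row_summable] dominated
    by (rule infsum_dominated_convergence) (unfold coeff_op_def, intro tendsto_intros conv dual_frame_in_H00)
  then have "(\<lambda>n. cinner (fs n) (\<psi>t k)) \<longlonglongrightarrow> gram \<psi>t \<psi> (coeff_op \<psi>t \<phi>) k"
    unfolding gram_def by (simp add: infsumI[OF dual_frame_coefficients_reproduced[OF dual]])
  moreover have "(\<lambda>n. cinner (fs n) (\<psi>t k)) \<longlonglongrightarrow> coeff_op \<psi>t \<phi> k"
    unfolding coeff_op_def by (intro conv dual_frame_in_H00)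
  ultimately show "gram \<psi>t \<psi> (coeff_op \<psi>t \<phi>) k = coeff_op \<psi>t \<phi> k"
    by (rule LIMSEQ_unique)
qed

text \<open>Every Gram-fixed sequence \<open>\<alpha>\<close> is the coefficient sequence of the weak limit of the
  partial sums of \<open>\<Sum>\<^sub>l \<alpha>\<^sub>l \<psi>\<^sub>l\<close> along an exhaustion of the index set.\<close>

lemma Hinf_w_of_gram_fixed:
  assumes countable: "countable (UNIV :: 'i set)"
    and \<alpha>: "\<alpha> \<in> linf_w w" and fixed: "gram \<psi>t \<psi> \<alpha> = \<alpha>"
  shows "\<exists>\<phi>\<in>Hinf_w w \<psi>t. coeff_op \<psi>t \<phi> = \<alpha>"
proof -
  define F :: "nat \<Rightarrow> 'i set" where "F N = to_nat_on UNIV -` {..<N}" for N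
  define fs where "fs N = (\<Sum>l\<in>F N. scaleC (\<alpha> l) (\<psi> l))" for N
  have coeff_fs: "cinner (fs N) (\<psi>t k) = (\<Sum>l\<in>F N. cinner (\<psi> l) (\<psi>t k) * \<alpha> l)" for N k
    unfolding fs_def cinner_sum_left by (simp add: cinner_scaleC_left mult.commute)
  have conv: "(\<lambda>N. cinner (fs N) (\<psi>t k)) \<longlonglongrightarrow> \<alpha> k" for k
    using tendsto_sum_to_nat_on_infsum[OF countable gram_terms_summable[OF \<alpha>, of k]] fixed
    unfolding coeff_fs F_def gram_def by (simp add: fun_eq_iff)
  have "finite (F N)" for N
    unfolding F_def using countable by (intro finite_vimageI) auto
  then have bound: "cmod (cinner (fs N) (\<psi>t k)) * w k \<le> M * linf_w_norm w \<alpha>" for N k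
    unfolding coeff_fs by (rule norm_gram_partial_sum_le[OF \<alpha>])
  have "\<exists>L. (\<lambda>N. cinner (fs N) v) \<longlonglongrightarrow> L" if "v \<in> H00 \<psi>t" for v
  proof -
    from that obtain G c where "finite G" and v: "v = (\<Sum>k\<in>G. scaleC (c k) (\<psi>t k))"
      unfolding H00_def by blast
    have "(\<lambda>N. \<Sum>k\<in>G. cnj (c k) * cinner (fs N) (\<psi>t k)) \<longlonglongrightarrow> (\<Sum>k\<in>G. cnj (c k) * \<alpha> k)"
      by (intro tendsto_intros conv)
    then show ?thesis
      unfolding v cinner_sum_right cinner_scaleC_right by blast
  qed
  then obtain L where L: "\<And>v. v \<in> H00 \<psi>t \<Longrightarrow> (\<lambda>N. cinner (fs N) v) \<longlonglongrightarrow> L v"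
    by metis
  define \<phi> where "\<phi> v = (if v \<in> H00 \<psi>t then L v else 0)" for v
  have "\<phi> \<in> Hbar \<psi>t"
    unfolding \<phi>_def[abs_def] by (rule Hbar_pointwise_limit[OF L])
  then have "\<phi> \<in> Hinf_w w \<psi>t"
    by (rule Hinf_wI[where fs = fs]) (use bound L in \<open>auto simp: \<phi>_def\<close>)
  moreover have "coeff_op \<psi>t \<phi> = \<alpha>"
  proof
    fix k
    have "(\<lambda>N. cinner (fs N) (\<psi>t k)) \<longlonglongrightarrow> coeff_op \<psi>t \<phi> k"
      unfolding coeff_op_def \<phi>_def using L[OF dual_frame_in_H00] dual_frame_in_H00[of \<psi>t k] by simp
    with conv show "coeff_op \<psi>t \<phi> k = \<alpha> k"
      using LIMSEQ_unique by blast
  qed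
  ultimately show ?thesis
    by blast
qed

lemma Hinf_w_eq_Hbar_gram_fixed:
  assumes "is_dual_frame \<psi> \<psi>t" and "countable (UNIV :: 'i set)"
  shows "Hinf_w w \<psi>t = {\<phi> \<in> Hbar \<psi>t. coeff_op \<psi>t \<phi> \<in> {\<alpha> \<in> linf_w w. gram \<psi>t \<psi> \<alpha> = \<alpha>}}"
proof (intro set_eqI iffI)
  fix \<phi>
  assume "\<phi> \<in> Hinf_w w \<psi>t"
  then show "\<phi> \<in> {\<phi> \<in> Hbar \<psi>t. coeff_op \<psi>t \<phi> \<in> {\<alpha> \<in> linf_w w. gram \<psi>t \<psi> \<alpha> = \<alpha>}}"
    using coeff_op_Hinf_w coeff_op_gram_fixed[OF assms(1)] unfolding Hinf_w_def by blast
next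
  fix \<phi>
  assume \<phi>: "\<phi> \<in> {\<phi> \<in> Hbar \<psi>t. coeff_op \<psi>t \<phi> \<in> {\<alpha> \<in> linf_w w. gram \<psi>t \<psi> \<alpha> = \<alpha>}}"
  then obtain \<theta> where "\<theta> \<in> Hinf_w w \<psi>t" "coeff_op \<psi>t \<theta> = coeff_op \<psi>t \<phi>"
    using Hinf_w_of_gram_fixed[OF assms(2)] by blast
  moreover from this(1) have "\<theta> \<in> Hbar \<psi>t"
    unfolding Hinf_w_def by blast
  ultimately have "\<theta> = \<phi>"
    using \<phi> by (intro Hbar_eqI) (auto simp: coeff_op_def fun_eq_iff)
  with \<open>\<theta> \<in> Hinf_w w \<psi>t\<close> show "\<phi> \<in> Hinf_w w \<psi>t"
    by simp
qed

end

theorem mainTheorem10: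
  fixes \<psi> \<psi>t :: "'i::countable \<Rightarrow> 'a::complex_hilbert"
    and w :: "'i \<Rightarrow> real"
  assumes separable: "\<exists>D::'a set. countable D \<and> closure D = UNIV"
    and w_pos: "\<forall>k. 0 < w k"
    and dual: "is_dual_frame \<psi> \<psi>t"
    and gram_bdd: "gram_bounded_w w \<psi>t \<psi>"
  shows "closed_subspace_linf_w w {\<alpha> \<in> linf_w w. gram \<psi>t \<psi> \<alpha> = \<alpha>}
    \<and> (\<forall>\<phi>\<in>Hinf_w w \<psi>t. coeff_op \<psi>t \<phi> \<in> linf_w w)
    \<and> banach_fun_space (Hinf_w w \<psi>t) (Hinf_w_norm w \<psi>t)"
proof -
  obtain M where "gram_schur_bound w \<psi>t \<psi> M"
    using gram_bdd w_pos unfolding gram_bounded_w_def gram_schur_bound_def by blast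
  then interpret gram_schur_bound w \<psi>t \<psi> M .
  let ?V = "{\<alpha> \<in> linf_w w. gram \<psi>t \<psi> \<alpha> = \<alpha>}"
  have V: "closed_subspace_linf_w w ?V"
    by (rule gram_fixed_points_closed_subspace)
  have onto: "\<exists>\<phi>\<in>Hbar \<psi>t. (\<lambda>k. \<phi> (\<psi>t k)) = \<alpha>" if "\<alpha> \<in> ?V" for \<alpha>
    using Hinf_w_of_gram_fixed[of \<alpha>] that unfolding Hinf_w_def coeff_op_def by auto
  have "banach_fun_space {\<phi> \<in> Hbar \<psi>t. (\<lambda>k. \<phi> (\<psi>t k)) \<in> ?V} (\<lambda>\<phi>. linf_w_norm w (\<lambda>k. \<phi> (\<psi>t k)))"
    using banach_fun_space_closed_subspace[OF w_pos V] Hbar_zero Hbar_add Hbar_scale Hbar_eqI onto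
    by (rule banach_fun_space_coefficient_preimage)
  then have "banach_fun_space (Hinf_w w \<psi>t) (Hinf_w_norm w \<psi>t)"
    unfolding Hinf_w_eq_Hbar_gram_fixed[OF dual countableI_type] Hinf_w_norm_def[abs_def] coeff_op_def .
  with V show ?thesis
    using coeff_op_Hinf_w by blast
qed

end
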